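(* Assume that $0<h<1$, that $2/h$ is not an integer, and that $$\lim_{\beta\to\infty}|\Lambda_{L_\beta}|^{1/2}\big\{e^{-[(n_0+1)h-2]\beta}+e^{-h\beta}\big\}=0\quad\text{and}\quad\lim_{\beta\to\infty}|\Lambda_{L_\beta}|^{2}e^{-(2-h)\beta}=0.$$ Then $$\lim_{\beta\to\infty}\frac{\mathrm{cap}(\mathbf{-1},\mathbf{+1})}{\mathrm{cap}(\mathbf{-1},\{\mathbf 0,\mathbf{+1}\})}=1.$$
   Context: Blume–Capel model. Fix $h\in(0,2)$, $n_0=\lfloor 2/h\rfloor$. For each $\beta>0$, $L=L_\beta$ is a positive integer (with $L_\beta\ge n_0(n_0+1)+2$), $\Lambda_L$ the two-dimensional discrete torus of side $L$, $\Omega_L=\{-1,0,1\}^{\Lambda_L}$. Hamiltonian $\mathbb H(\sigma)=\sum(\sigma(y)-\sigma(x))^2-h\sum_x\sigma(x)$, first sum over unordered nearest-neighbour pairs. $\sigma^{x,\pm}$: replace $\sigma(x)$ by $\sigma(x)\pm1$ modulo $3$ in $\{-1,0,1\}$. $(\sigma_t)$ jumps from $\sigma$ to $\sigma^{x,\pm}$ at rate $R_\beta(\sigma,\sigma^{x,\pm})=\exp\{-\beta[\mathbb H(\sigma^{x,\pm})-\mathbb H(\sigma)]_+\}$; $\mathbb P_\sigma$ its law. $\mu_\beta(\sigma)=Z_\beta^{-1}e^{-\beta\mathbb H(\sigma)}$, $\lambda_\beta(\sigma)=\sum_{\sigma'}R_\beta(\sigma,\sigma')$, $H_A=\inf\{t>0:\sigma_t\in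 A\}$, $H_A^+=\inf\{t>T_1:\sigma_t\in A\}$ ($T_1$ first jump time). For disjoint $A,B$, $\mathrm{cap}(A,B)=\sum_{\sigma\in A}\mu_\beta(\sigma)\lambda_\beta(\sigma)\mathbb P_\sigma[H_B<H_A^+]$ (a single configuration stands for the singleton). $\mathbf{-1},\mathbf 0,\mathbf{+1}$ are the constant configurations. *)

theory Defs
  imports "HOL-Analysis.Analysis"
begin

type_synonym site = "nat \<times> nat"
type_synonym config = "site \<Rightarrow> int"

definition torus :: "nat \<Rightarrow> site set" where
  "torus L = {0..<L} \<times> {0..<L}"

text \<open>Configurations: spins in {-1,0,1} on the torus (extensional: 0 off the torus).\<close>
definition configs :: "nat \<Rightarrow> config set" where
  "configs L = {\<sigma>. (\<forall>x\<in>torus L. \<sigma> x \<in> {-1,0,1}) \<and> (\<forall>x. x \<notin> torus L \<longrightarrow> \<sigma> x = 0)}"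

definition const_conf :: "nat \<Rightarrow> int \<Rightarrow> config" where
  "const_conf L c = (\<lambda>x. if x \<in> torus L then c else 0)"

text \<open>a + 1 and a - 1 modulo 3 inside {-1,0,1}.\<close>
definition cyc_up :: "int \<Rightarrow> int" where
  "cyc_up a = (if a = -1 then 0 else if a = 0 then 1 else -1)"

definition cyc_down :: "int \<Rightarrow> int" where
  "cyc_down a = (if a = -1 then 1 else if a = 0 then -1 else 0)"

text \<open>flip True x \<sigma> = \<sigma>^{x,+}, flip False x \<sigma> = \<sigma>^{x,-}.\<close>
definition flip :: "bool \<Rightarrow> site \<Rightarrow> config \<Rightarrow> config" where
  "flip s x \<sigma> = \<sigma>(x := (if s then cyc_up (\<sigma> x) else cyc_down (\<sigma> x)))"

text \<open>Hamiltonian; every unordered nearest-neighbour pair {x, x+e_k} is counted once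
  (valid since L \<ge> 3).\<close>
definition ham :: "real \<Rightarrow> nat \<Rightarrow> config \<Rightarrow> real" where
  "ham h L \<sigma> =
     (\<Sum>x\<in>torus L. real_of_int ((\<sigma> ((fst x + 1) mod L, snd x) - \<sigma> x)^2
                              + (\<sigma> (fst x, (snd x + 1) mod L) - \<sigma> x)^2))
     - h * (\<Sum>x\<in>torus L. real_of_int (\<sigma> x))"

definition rate :: "real \<Rightarrow> real \<Rightarrow> nat \<Rightarrow> config \<Rightarrow> config \<Rightarrow> real" where
  "rate \<beta> h L \<sigma> \<sigma>' = exp (- \<beta> * max 0 (ham h L \<sigma>' - ham h L \<sigma>))"

definition lam :: "real \<Rightarrow> real \<Rightarrow> nat \<Rightarrow> config \<Rightarrow> real" where
  "lam \<beta> h L \<sigma> = (\<Sum>x\<in>torus L. \<Sum>s\<in>(UNIV::bool set). rate \<beta> h L \<sigma> (flip s x \<sigma>))"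

definition gibbs :: "real \<Rightarrow> real \<Rightarrow> nat \<Rightarrow> config \<Rightarrow> real" where
  "gibbs \<beta> h L \<sigma> = exp (- \<beta> * ham h L \<sigma>) / (\<Sum>\<tau>\<in>configs L. exp (- \<beta> * ham h L \<tau>))"

text \<open>hitq \<beta> h L A B n \<sigma>: probability that the jump chain started at \<sigma>, within its
  first n jumps, visits B, without having visited A (at jump times \<ge> 1) before.\<close>
primrec hitq :: "real \<Rightarrow> real \<Rightarrow> nat \<Rightarrow> config set \<Rightarrow> config set \<Rightarrow> nat \<Rightarrow> config \<Rightarrow> real" where
  "hitq \<beta> h L A B 0 \<sigma> = 0"
| "hitq \<beta> h L A B (Suc n) \<sigma> =
     (\<Sum>x\<in>torus L. \<Sum>s\<in>(UNIV::bool set).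
        rate \<beta> h L \<sigma> (flip s x \<sigma>) / lam \<beta> h L \<sigma> *
        (if flip s x \<sigma> \<in> B then 1 else if flip s x \<sigma> \<in> A then 0
         else hitq \<beta> h L A B n (flip s x \<sigma>)))"

text \<open>P_\<sigma>[H_B < H_A^+] (continuity from below over the number of jumps).\<close>
definition escape_prob :: "real \<Rightarrow> real \<Rightarrow> nat \<Rightarrow> config set \<Rightarrow> config set \<Rightarrow> config \<Rightarrow> real" where
  "escape_prob \<beta> h L A B \<sigma> = (SUP n. hitq \<beta> h L A B n \<sigma>)"

definition cap :: "real \<Rightarrow> real \<Rightarrow> nat \<Rightarrow> config set \<Rightarrow> config set \<Rightarrow> real" where
  "cap \<beta> h L A B = (\<Sum>\<sigma>\<in>A. gibbs \<beta> h L \<sigma> * lam \<beta> h L \<sigma> * escape_prob \<beta> h L A B \<sigma>)"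

definition n0 :: "real \<Rightarrow> nat" where
  "n0 h = nat \<lfloor>2 / h\<rfloor>"

end

theory Submission
  imports Defs
begin

text \<open>Both capacities carry the prefactor \<open>\<mu>(-1) \<lambda>(-1)\<close>, so their ratio is \<open>e1 / e2\<close> with
  \<open>e1 = P[H(+1) < H\<^sup>+(-1)] \<le> e2 = P[H{0, +1} < H\<^sup>+(-1)]\<close> for the chain started at \<open>-1\<close>.
  Stopping the chain at its first visit to \<open>{0, +1}\<close> gives \<open>e1 \<ge> g(0) e2\<close>, where \<open>g\<close> is the
  equilibrium potential of the pair \<open>(-1, +1)\<close>. The Dirichlet form of \<open>g\<close> is \<open>2 cap(-1, +1)\<close>, hence
  at most \<open>4 |\<Lambda>| \<mu>(-1)\<close>, of order \<open>exp(-\<beta> h |\<Lambda>|)\<close>; the path from \<open>0\<close> to \<open>+1\<close> that turns the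
  sites to \<open>+1\<close> row by row never exceeds energy \<open>2L + 2\<close>. Cauchy-Schwarz along this path gives
  \<open>(1 - g(0))\<^sup>2 \<le> 4 |\<Lambda>|\<^sup>2 exp(-(2 - h) \<beta>)\<close>, which squeezes the ratio to \<open>1\<close>.\<close>

lemma finite_torus [simp]: "finite (torus L)"
  by (simp add: torus_def)

lemma card_torus: "card (torus L) = L * L"
  by (simp add: torus_def)

lemma sum_torus: "(\<Sum>x\<in>torus L. f x) = (\<Sum>i<L. \<Sum>j<L. f (i, j))"
  by (simp add: torus_def sum.cartesian_product atLeast0LessThan)

lemma finite_configs [simp]: "finite (configs L)"
proof -
  have "configs L = {f. \<forall>x. (x \<in> torus L \<longrightarrow> f x \<in> {-1,0,1}) \<and> (x \<notin> torus L \<longrightarrow> f x = 0)}"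
    by (auto simp: configs_def)
  then show ?thesis
    using finite_set_of_finite_funs[of "torus L" "{-1,0,1::int}" 0] by simp
qed

lemma const_conf_in_configs: "c \<in> {-1,0,1} \<Longrightarrow> const_conf L c \<in> configs L"
  by (auto simp: configs_def const_conf_def)

lemma const_conf_inject: "0 < L \<Longrightarrow> const_conf L c = const_conf L d \<longleftrightarrow> c = d"
  by (auto simp: const_conf_def torus_def fun_eq_iff dest!: spec[of _ "(0,0)"])

lemma flip_in_configs: "\<sigma> \<in> configs L \<Longrightarrow> y \<in> torus L \<Longrightarrow> flip s y \<sigma> \<in> configs L"
  by (auto simp: configs_def flip_def cyc_up_def cyc_down_def)

lemma flip_flip_inverse: "\<sigma> \<in> configs L \<Longrightarrow> y \<in> torus L \<Longrightarrow> flip (\<not> s) y (flip s y \<sigma>) = \<sigma>"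
  by (auto simp: configs_def flip_def cyc_up_def cyc_down_def fun_eq_iff)

lemma ham_const_conf: "ham h L (const_conf L c) = - h * c * real (L * L)"
proof -
  have "((fst x + 1) mod L, snd x) \<in> torus L \<and> (fst x, (snd x + 1) mod L) \<in> torus L"
    if "x \<in> torus L" for x
    using that by (auto simp: torus_def)
  then have "ham h L (const_conf L c) = - h * (\<Sum>x\<in>torus L. real_of_int c)"
    unfolding ham_def const_conf_def by (simp cong: sum.cong)
  then show ?thesis by (simp add: card_torus)
qed

lemma rate_pos: "0 < rate \<beta> h L \<sigma> \<sigma>'"
  by (simp add: rate_def)

lemma rate_le_1: "0 \<le> \<beta> \<Longrightarrow> rate \<beta> h L \<sigma> \<sigma>' \<le> 1"
  by (simp add: rate_def)

lemma lam_nonneg: "0 \<le> lam \<beta> h L \<sigma>"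
  unfolding lam_def by (intro sum_nonneg) (auto intro: less_imp_le[OF rate_pos])

lemma lam_pos: "0 < L \<Longrightarrow> 0 < lam \<beta> h L \<sigma>"
  unfolding lam_def by (intro sum_pos) (auto simp: torus_def intro!: sum_pos rate_pos)

lemma lam_le: "0 \<le> \<beta> \<Longrightarrow> lam \<beta> h L \<sigma> \<le> 2 * real (L * L)"
proof -
  assume "0 \<le> \<beta>"
  then have "lam \<beta> h L \<sigma> \<le> (\<Sum>x\<in>torus L. \<Sum>s\<in>(UNIV::bool set). 1)"
    unfolding lam_def by (intro sum_mono rate_le_1)
  then show ?thesis by (simp add: card_torus)
qed

lemma jump_prob_nonneg: "0 \<le> rate \<beta> h L \<sigma> \<sigma>' / lam \<beta> h L \<sigma>"
  by (intro divide_nonneg_nonneg lam_nonneg less_imp_le[OF rate_pos])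

lemma sum_jump_prob:
  "0 < L \<Longrightarrow> (\<Sum>x\<in>torus L. \<Sum>s\<in>(UNIV::bool set). rate \<beta> h L \<sigma> (flip s x \<sigma>) / lam \<beta> h L \<sigma>) = 1"
  using lam_pos[of L \<beta> h \<sigma>] by (simp add: lam_def flip: sum_divide_distrib)

lemma hitq_nonneg: "0 \<le> hitq \<beta> h L A B n \<sigma>"
proof (induction n arbitrary: \<sigma>)
  case (Suc n)
  then show ?case
    unfolding hitq.simps by (intro sum_nonneg mult_nonneg_nonneg jump_prob_nonneg) auto
qed simp

lemma hitq_le_1: "0 < L \<Longrightarrow> hitq \<beta> h L A B n \<sigma> \<le> 1"
proof (induction n arbitrary: \<sigma>)
  case 0
  then show ?case by simp
next
  case (Suc n)
  have "hitq \<beta> h L A B (Suc n) \<sigma>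
      \<le> (\<Sum>x\<in>torus L. \<Sum>s\<in>(UNIV::bool set). rate \<beta> h L \<sigma> (flip s x \<sigma>) / lam \<beta> h L \<sigma> * 1)"
    unfolding hitq.simps by (intro sum_mono mult_left_mono) (auto simp: Suc jump_prob_nonneg)
  also have "\<dots> = 1"
    using sum_jump_prob[OF Suc.prems] by simp
  finally show ?case .
qed

lemma hitq_Suc_ge: "hitq \<beta> h L A B n \<sigma> \<le> hitq \<beta> h L A B (Suc n) \<sigma>"
proof (induction n arbitrary: \<sigma>)
  case 0
  then show ?case using hitq_nonneg[of _ _ _ _ _ "Suc 0"] by simp
next
  case (Suc n)
  show ?case
    unfolding hitq.simps(2)[of \<beta> h L A B "Suc n" \<sigma>] hitq.simps(2)[of \<beta> h L A B n \<sigma>]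
    by (intro sum_mono mult_left_mono) (auto simp del: hitq.simps intro: Suc.IH jump_prob_nonneg)
qed

lemma hitq_tendsto_escape_prob:
  "0 < L \<Longrightarrow> (\<lambda>n. hitq \<beta> h L A B n \<sigma>) \<longlonglongrightarrow> escape_prob \<beta> h L A B \<sigma>"
  unfolding escape_prob_def
  by (rule LIMSEQ_incseq_SUP) (auto intro: bdd_aboveI[where M = 1] hitq_le_1 incseq_SucI hitq_Suc_ge)

lemma escape_prob_nonneg: "0 < L \<Longrightarrow> 0 \<le> escape_prob \<beta> h L A B \<sigma>"
  by (rule LIMSEQ_le_const[OF hitq_tendsto_escape_prob]) (auto simp: hitq_nonneg)

lemma escape_prob_le_1: "0 < L \<Longrightarrow> escape_prob \<beta> h L A B \<sigma> \<le> 1"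
  by (rule LIMSEQ_le_const2[OF hitq_tendsto_escape_prob]) (auto simp: hitq_le_1)

definition eq_potential :: "real \<Rightarrow> real \<Rightarrow> nat \<Rightarrow> config set \<Rightarrow> config set \<Rightarrow> config \<Rightarrow> real" where
  "eq_potential \<beta> h L A B \<sigma> = (if \<sigma> \<in> B then 1 else if \<sigma> \<in> A then 0 else escape_prob \<beta> h L A B \<sigma>)"

lemma eq_potential_nonneg: "0 < L \<Longrightarrow> 0 \<le> eq_potential \<beta> h L A B \<sigma>"
  by (simp add: eq_potential_def escape_prob_nonneg)

lemma eq_potential_le_1: "0 < L \<Longrightarrow> eq_potential \<beta> h L A B \<sigma> \<le> 1"
  by (simp add: eq_potential_def escape_prob_le_1)

lemma escape_prob_first_step:
  assumes "0 < L"
  shows "escape_prob \<beta> h L A B \<sigma> = (\<Sum>x\<in>torus L. \<Sum>s\<in>(UNIV::bool set).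
           rate \<beta> h L \<sigma> (flip s x \<sigma>) / lam \<beta> h L \<sigma> * eq_potential \<beta> h L A B (flip s x \<sigma>))"
proof -
  have "(\<lambda>n. hitq \<beta> h L A B (Suc n) \<sigma>) \<longlonglongrightarrow> (\<Sum>x\<in>torus L. \<Sum>s\<in>(UNIV::bool set).
           rate \<beta> h L \<sigma> (flip s x \<sigma>) / lam \<beta> h L \<sigma> * eq_potential \<beta> h L A B (flip s x \<sigma>))"
    unfolding hitq.simps eq_potential_def
    by (intro tendsto_sum tendsto_mult tendsto_const) (auto intro: hitq_tendsto_escape_prob[OF assms])
  then show ?thesis
    using LIMSEQ_Suc[OF hitq_tendsto_escape_prob[OF assms]] LIMSEQ_unique by blast
qed

lemma escape_prob_mono_target:
  assumes "0 < L" "B \<subseteq> B'"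
  shows "escape_prob \<beta> h L A B \<sigma> \<le> escape_prob \<beta> h L A B' \<sigma>"
proof -
  have "hitq \<beta> h L A B n \<tau> \<le> hitq \<beta> h L A B' n \<tau>" for n \<tau>
  proof (induction n arbitrary: \<tau>)
    case (Suc n)
    show ?case
      unfolding hitq.simps
      by (intro sum_mono mult_left_mono jump_prob_nonneg)
         (use assms hitq_le_1 hitq_nonneg Suc.IH in auto)
  qed simp
  then show ?thesis
    by (intro LIMSEQ_le[OF hitq_tendsto_escape_prob hitq_tendsto_escape_prob]) (use assms in auto)
qed

text \<open>The strong Markov property at the first visit to \<open>B'\<close>, as an inequality.\<close>
lemma escape_prob_ge_stopped:
  assumes L: "0 < L" and "B \<subseteq> B'" and c: "\<And>\<tau>. \<tau> \<in> B' \<Longrightarrow> c \<le> eq_potential \<beta> h L A B \<tau>"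
  shows "c * escape_prob \<beta> h L A B' \<sigma> \<le> escape_prob \<beta> h L A B \<sigma>"
proof -
  let ?g = "eq_potential \<beta> h L A B"
  have step: "c * hitq \<beta> h L A B' (Suc n) \<sigma> \<le> escape_prob \<beta> h L A B \<sigma>"
    if IH: "\<And>\<tau>. \<tau> \<notin> A \<union> B' \<Longrightarrow> c * hitq \<beta> h L A B' n \<tau> \<le> ?g \<tau>" for n \<sigma>
  proof -
    have "c * hitq \<beta> h L A B' (Suc n) \<sigma> = (\<Sum>x\<in>torus L. \<Sum>s\<in>(UNIV::bool set).
        rate \<beta> h L \<sigma> (flip s x \<sigma>) / lam \<beta> h L \<sigma> * (c * (if flip s x \<sigma> \<in> B' then 1
          else if flip s x \<sigma> \<in> A then 0 else hitq \<beta> h L A B' n (flip s x \<sigma>))))"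
      unfolding hitq.simps sum_distrib_left by (simp add: mult_ac)
    also have "\<dots> \<le> (\<Sum>x\<in>torus L. \<Sum>s\<in>(UNIV::bool set).
        rate \<beta> h L \<sigma> (flip s x \<sigma>) / lam \<beta> h L \<sigma> * ?g (flip s x \<sigma>))"
      by (intro sum_mono mult_left_mono jump_prob_nonneg) (use IH c eq_potential_nonneg[OF L] in auto)
    also have "\<dots> = escape_prob \<beta> h L A B \<sigma>"
      by (rule escape_prob_first_step[OF L, symmetric])
    finally show ?thesis .
  qed
  have "\<tau> \<notin> A \<union> B' \<Longrightarrow> c * hitq \<beta> h L A B' n \<tau> \<le> ?g \<tau>" for n \<tau>
  proof (induction n arbitrary: \<tau>)
    case 0
    then show ?case using eq_potential_nonneg[OF L] by simp
  next
    case (Suc n)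
    then show ?case using step[OF Suc.IH] \<open>B \<subseteq> B'\<close> by (auto simp: eq_potential_def)
  qed
  then have "\<forall>n. c * hitq \<beta> h L A B' (Suc n) \<sigma> \<le> escape_prob \<beta> h L A B \<sigma>"
    using step by blast
  moreover have "(\<lambda>n. c * hitq \<beta> h L A B' (Suc n) \<sigma>) \<longlonglongrightarrow> c * escape_prob \<beta> h L A B' \<sigma>"
    by (intro tendsto_mult_left LIMSEQ_Suc hitq_tendsto_escape_prob[OF L])
  ultimately show ?thesis by (intro LIMSEQ_le_const2) auto
qed

definition partition_fun :: "real \<Rightarrow> real \<Rightarrow> nat \<Rightarrow> real" where
  "partition_fun \<beta> h L = (\<Sum>\<tau>\<in>configs L. exp (- \<beta> * ham h L \<tau>))"

lemma partition_fun_pos: "0 < partition_fun \<beta> h L"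
  unfolding partition_fun_def using const_conf_in_configs[of 0 L] by (intro sum_pos) auto

lemma gibbs_eq: "gibbs \<beta> h L \<sigma> = exp (- \<beta> * ham h L \<sigma>) / partition_fun \<beta> h L"
  by (simp add: gibbs_def partition_fun_def)

lemma gibbs_pos: "0 < gibbs \<beta> h L \<sigma>"
  using partition_fun_pos by (simp add: gibbs_eq)

lemma gibbs_mult_rate:
  "gibbs \<beta> h L \<sigma> * rate \<beta> h L \<sigma> \<sigma>' = exp (- \<beta> * max (ham h L \<sigma>) (ham h L \<sigma>')) / partition_fun \<beta> h L"
proof -
  have "exp (- \<beta> * ham h L \<sigma>) * exp (- \<beta> * max 0 (ham h L \<sigma>' - ham h L \<sigma>)) =
        exp (- \<beta> * max (ham h L \<sigma>) (ham h L \<sigma>'))"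
    unfolding exp_add[symmetric] by (simp add: max_def algebra_simps)
  then show ?thesis by (simp add: gibbs_eq rate_def)
qed

lemma detailed_balance: "gibbs \<beta> h L \<sigma> * rate \<beta> h L \<sigma> \<sigma>' = gibbs \<beta> h L \<sigma>' * rate \<beta> h L \<sigma>' \<sigma>"
  by (simp add: gibbs_mult_rate max.commute)

definition dirichlet_form :: "real \<Rightarrow> real \<Rightarrow> nat \<Rightarrow> (config \<Rightarrow> real) \<Rightarrow> real" where
  "dirichlet_form \<beta> h L g = (\<Sum>\<sigma>\<in>configs L. \<Sum>y\<in>torus L. \<Sum>s\<in>(UNIV::bool set).
     gibbs \<beta> h L \<sigma> * rate \<beta> h L \<sigma> (flip s y \<sigma>) * (g (flip s y \<sigma>) - g \<sigma>)^2)"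

lemma dirichlet_form_nonneg: "0 \<le> dirichlet_form \<beta> h L g"
  unfolding dirichlet_form_def
  by (intro sum_nonneg mult_nonneg_nonneg less_imp_le[OF gibbs_pos] less_imp_le[OF rate_pos]) auto

definition transitions :: "nat \<Rightarrow> (config \<times> site \<times> bool) set" where
  "transitions L = configs L \<times> torus L \<times> UNIV"

definition reverse_transition :: "config \<times> site \<times> bool \<Rightarrow> config \<times> site \<times> bool" where
  "reverse_transition t = (case t of (\<sigma>, y, s) \<Rightarrow> (flip s y \<sigma>, y, \<not> s))"

lemma bij_reverse_transition: "bij_betw reverse_transition (transitions L) (transitions L)"
  by (rule bij_betw_byWitness[where f' = reverse_transition])
     (auto simp: reverse_transition_def transitions_def flip_flip_inverse flip_in_configs)

lemma sum_transitions:
  "(\<Sum>t\<in>transitions L. f t) = (\<Sum>\<sigma>\<in>configs L. \<Sum>y\<in>torus L. \<Sum>s\<in>(UNIV::bool set). f (\<sigma>, y, s))"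
  by (simp add: transitions_def sum.cartesian_product split_def)

lemma sum_eq_0_if_odd_involution:
  fixes f :: "'a \<Rightarrow> real"
  assumes "bij_betw \<iota> T T" and "\<And>t. t \<in> T \<Longrightarrow> f (\<iota> t) = - f t"
  shows "sum f T = 0"
proof -
  have "sum f T = sum (f \<circ> \<iota>) T"
    using sum.reindex_bij_betw[OF assms(1), of f] by simp
  also have "\<dots> = - sum f T"
    using assms(2) by (simp add: sum_negf[symmetric])
  finally show ?thesis by simp
qed

lemma dirichlet_form_harmonic:
  assumes a: "a \<in> configs L" and b: "b \<in> configs L" and "a \<noteq> b" and "g a = 0" and "g b = 1"
    and harmonic: "\<And>\<sigma>. \<sigma> \<in> configs L \<Longrightarrow> \<sigma> \<noteq> a \<Longrightarrow> \<sigma> \<noteq> b \<Longrightarrow>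
        (\<Sum>y\<in>torus L. \<Sum>s\<in>(UNIV::bool set). rate \<beta> h L \<sigma> (flip s y \<sigma>) * (g (flip s y \<sigma>) - g \<sigma>)) = 0"
  shows "dirichlet_form \<beta> h L g =
    2 * gibbs \<beta> h L a * (\<Sum>y\<in>torus L. \<Sum>s\<in>(UNIV::bool set). rate \<beta> h L a (flip s y a) * g (flip s y a))"
proof -
  define W where "W t = (case t of (\<sigma>, y, s) \<Rightarrow> gibbs \<beta> h L \<sigma> * rate \<beta> h L \<sigma> (flip s y \<sigma>))" for t
  define G1 where "G1 t = (case t of (\<sigma>, y, s) \<Rightarrow> g (flip s y \<sigma>))" for t
  define G0 where "G0 t = (case t of (\<sigma>, _ :: site, _ :: bool) \<Rightarrow> g \<sigma>)" for t
  define I where "I \<sigma> = (\<Sum>y\<in>torus L. \<Sum>s\<in>(UNIV::bool set).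
    rate \<beta> h L \<sigma> (flip s y \<sigma>) * (g (flip s y \<sigma>) - g \<sigma>))" for \<sigma>
  have reverse: "W (reverse_transition t) = W t" "G1 (reverse_transition t) = G0 t"
    "G0 (reverse_transition t) = G1 t" if "t \<in> transitions L" for t
    using that by (auto simp: W_def G1_def G0_def reverse_transition_def transitions_def
      flip_flip_inverse detailed_balance)
  have odd1: "(\<Sum>t\<in>transitions L. W t * (G1 t - G0 t)) = 0"
    and odd2: "(\<Sum>t\<in>transitions L. W t * (G1 t - G0 t) * (G1 t + G0 t)) = 0"
    by (rule sum_eq_0_if_odd_involution[OF bij_reverse_transition]; simp add: reverse algebra_simps)+
  have only_ab: "(\<Sum>\<sigma>\<in>configs L. F \<sigma> * I \<sigma>) = F a * I a + F b * I b" for F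
  proof -
    have "(\<Sum>\<sigma>\<in>configs L. F \<sigma> * I \<sigma>) = (\<Sum>\<sigma>\<in>{a, b}. F \<sigma> * I \<sigma>)"
      by (rule sum.mono_neutral_right) (auto simp: a b I_def harmonic)
    then show ?thesis using \<open>a \<noteq> b\<close> by simp
  qed
  have "gibbs \<beta> h L a * I a + gibbs \<beta> h L b * I b = 0"
    using odd1 only_ab[of "gibbs \<beta> h L"]
    by (simp add: sum_transitions W_def G1_def G0_def I_def sum_distrib_left mult.assoc)
  moreover have "(\<Sum>t\<in>transitions L. W t * (G1 t - G0 t) * G0 t) = gibbs \<beta> h L b * I b"
    using only_ab[of "\<lambda>\<sigma>. gibbs \<beta> h L \<sigma> * g \<sigma>"] \<open>g a = 0\<close> \<open>g b = 1\<close>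
    by (simp add: sum_transitions W_def G1_def G0_def I_def sum_distrib_left mult_ac)
  moreover have "dirichlet_form \<beta> h L g = (\<Sum>t\<in>transitions L. W t * (G1 t - G0 t) * (G1 t + G0 t))
      - 2 * (\<Sum>t\<in>transitions L. W t * (G1 t - G0 t) * G0 t)"
    by (simp add: dirichlet_form_def sum_transitions W_def G1_def G0_def sum_distrib_left
        flip: sum_subtractf) (simp add: power2_eq_square algebra_simps)
  moreover have "gibbs \<beta> h L a * I a = gibbs \<beta> h L a *
      (\<Sum>y\<in>torus L. \<Sum>s\<in>(UNIV::bool set). rate \<beta> h L a (flip s y a) * g (flip s y a))"
    by (simp add: I_def \<open>g a = 0\<close>)
  ultimately show ?thesis using odd2 by linarith
qed

lemma square_sum_le_weighted:
  fixes c d :: "nat \<Rightarrow> real"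
  assumes "\<And>i. i < k \<Longrightarrow> 0 < c i"
  shows "(\<Sum>i<k. d i)^2 \<le> (\<Sum>i<k. c i * (d i)^2) * (\<Sum>i<k. 1 / c i)"
proof -
  have "(\<Sum>i<k. d i) = (\<Sum>i<k. (sqrt (c i) * d i) * (1 / sqrt (c i)))"
    by (rule sum.cong) (use assms in force)+
  then have "(\<Sum>i<k. d i)^2 \<le> (\<Sum>i<k. (sqrt (c i) * d i)^2) * (\<Sum>i<k. (1 / sqrt (c i))^2)"
    using Cauchy_Schwarz_ineq_sum by metis
  also have "(\<Sum>i<k. (sqrt (c i) * d i)^2) = (\<Sum>i<k. c i * (d i)^2)"
    by (rule sum.cong) (use assms in \<open>auto simp: power_mult_distrib less_imp_le\<close>)
  also have "(\<Sum>i<k. (1 / sqrt (c i))^2) = (\<Sum>i<k. 1 / c i)"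
    by (rule sum.cong) (use assms in \<open>auto simp: power_divide less_imp_le\<close>)
  finally show ?thesis .
qed

lemma square_diff_le_dirichlet_form_path:
  fixes g :: "config \<Rightarrow> real" and \<sigma> :: "nat \<Rightarrow> config"
  assumes "\<sigma> 0 \<in> configs L"
    and steps: "\<And>i. i < k \<Longrightarrow> y i \<in> torus L \<and> \<sigma> (Suc i) = flip (s i) (y i) (\<sigma> i)"
    and "inj_on \<sigma> {..<k}"
  shows "(g (\<sigma> k) - g (\<sigma> 0))^2 \<le> dirichlet_form \<beta> h L g *
    (\<Sum>i<k. 1 / (gibbs \<beta> h L (\<sigma> i) * rate \<beta> h L (\<sigma> i) (\<sigma> (Suc i))))"
proof -
  have in_configs: "i \<le> k \<Longrightarrow> \<sigma> i \<in> configs L" for i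
    by (induction i) (use assms flip_in_configs in auto)
  define c where "c i = gibbs \<beta> h L (\<sigma> i) * rate \<beta> h L (\<sigma> i) (\<sigma> (Suc i))" for i
  define F where "F t = (case t of (\<tau>, x, u) \<Rightarrow>
    gibbs \<beta> h L \<tau> * rate \<beta> h L \<tau> (flip u x \<tau>) * (g (flip u x \<tau>) - g \<tau>)^2)" for t
  define path where "path i = (\<sigma> i, y i, s i)" for i
  have c_pos: "0 < c i" for i
    unfolding c_def by (intro mult_pos_pos gibbs_pos rate_pos)
  have "inj_on path {..<k}"
    using \<open>inj_on \<sigma> {..<k}\<close> unfolding inj_on_def path_def by auto
  then have "(\<Sum>i<k. F (path i)) = (\<Sum>t\<in>path ` {..<k}. F t)"
    by (simp add: sum.reindex)
  also have "\<dots> \<le> (\<Sum>t\<in>transitions L. F t)"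
  proof (rule sum_mono2)
    show "path ` {..<k} \<subseteq> transitions L"
      using in_configs steps by (auto simp: path_def transitions_def)
  qed (auto simp: transitions_def F_def
      intro!: mult_nonneg_nonneg less_imp_le[OF gibbs_pos] less_imp_le[OF rate_pos])
  also have "\<dots> = dirichlet_form \<beta> h L g"
    by (simp add: sum_transitions F_def dirichlet_form_def)
  also have "(\<Sum>i<k. F (path i)) = (\<Sum>i<k. c i * (g (\<sigma> (Suc i)) - g (\<sigma> i))^2)"
    by (rule sum.cong) (auto simp: c_def F_def path_def steps)
  finally have "(\<Sum>i<k. c i * (g (\<sigma> (Suc i)) - g (\<sigma> i))^2) \<le> dirichlet_form \<beta> h L g" .
  moreover have "(g (\<sigma> k) - g (\<sigma> 0))^2
      \<le> (\<Sum>i<k. c i * (g (\<sigma> (Suc i)) - g (\<sigma> i))^2) * (\<Sum>i<k. 1 / c i)"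
    using square_sum_le_weighted[of k c "\<lambda>i. g (\<sigma> (Suc i)) - g (\<sigma> i)"] c_pos
      sum_lessThan_telescope[of "\<lambda>i. g (\<sigma> i)" k]
    by simp
  moreover have "0 \<le> (\<Sum>i<k. 1 / c i)"
    by (intro sum_nonneg) (simp add: c_pos less_imp_le)
  ultimately show ?thesis
    unfolding c_def by (meson mult_right_mono order_trans)
qed

lemma cyclic_threshold_changes:
  assumes L: "0 < L"
  shows cyclic_threshold_changes_le_2:
      "(\<Sum>j<L. of_bool ((Suc j mod L < t) \<noteq> (j < t)) :: real) \<le> 2"
    and cyclic_threshold_changes_eq_0:
      "t = 0 \<or> L \<le> t \<Longrightarrow> (\<Sum>j<L. of_bool ((Suc j mod L < t) \<noteq> (j < t)) :: real) = 0"
proof -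
  have "(\<Sum>j<L - 1. of_bool ((Suc j mod L < t) \<noteq> (j < t)) :: real)
      = (\<Sum>j<L - 1. if j = t - 1 \<and> 0 < t then 1 else 0)"
    by (rule sum.cong) auto
  also have "\<dots> = (if t - 1 < L - 1 \<and> 0 < t then 1 else 0)"
    by (cases "0 < t") (simp_all add: sum.delta')
  finally have inner: "(\<Sum>j<L - 1. of_bool ((Suc j mod L < t) \<noteq> (j < t)) :: real)
      = (if t - 1 < L - 1 \<and> 0 < t then 1 else 0)" .
  have "{..<L} = insert (L - 1) {..<L - 1}" and last: "Suc (L - 1) mod L = 0"
    using L by auto
  then have total: "(\<Sum>j<L. of_bool ((Suc j mod L < t) \<noteq> (j < t)) :: real) =
      of_bool ((0 < t) \<noteq> (L - 1 < t)) + (if t - 1 < L - 1 \<and> 0 < t then 1 else 0)"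
    by (simp only: sum.insert finite_lessThan lessThan_iff less_irrefl not_False_eq_True inner last)
  show "(\<Sum>j<L. of_bool ((Suc j mod L < t) \<noteq> (j < t)) :: real) \<le> 2"
    unfolding total by auto
  show "t = 0 \<or> L \<le> t \<Longrightarrow> (\<Sum>j<L. of_bool ((Suc j mod L < t) \<noteq> (j < t)) :: real) = 0"
    unfolding total using L by auto
qed

text \<open>The path from \<open>const_conf L a\<close> to \<open>const_conf L b\<close> that turns the sites to \<open>b\<close> one at a time,
  in the order of their rank \<open>j * L + i\<close>: row by row along the second coordinate.\<close>
definition fill :: "nat \<Rightarrow> int \<Rightarrow> int \<Rightarrow> nat \<Rightarrow> config" where
  "fill L a b m = (\<lambda>x. if x \<in> torus L then (if snd x * L + fst x < m then b else a) else 0)"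

definition fill_site :: "nat \<Rightarrow> nat \<Rightarrow> site" where
  "fill_site L m = (m mod L, m div L)"

lemma fill_0: "fill L a b 0 = const_conf L a"
  by (simp add: fill_def const_conf_def fun_eq_iff)

lemma rank_less_card_torus: "x \<in> torus L \<Longrightarrow> snd x * L + fst x < L * L"
proof -
  assume "x \<in> torus L"
  then have "fst x < L" "snd x < L" by (auto simp: torus_def)
  then have "snd x * L + fst x < Suc (snd x) * L" by simp
  also have "\<dots> \<le> L * L" using \<open>snd x < L\<close> by (intro mult_le_mono1) simp
  finally show ?thesis .
qed

lemma fill_card_torus: "fill L a b (L * L) = const_conf L b"
proof
  show "fill L a b (L * L) x = const_conf L b x" for x
    using rank_less_card_torus[of x L] by (simp add: fill_def const_conf_def)
qed

lemma fill_site_in_torus: "m < L * L \<Longrightarrow> fill_site L m \<in> torus L"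
  by (cases "L = 0") (auto simp: fill_site_def torus_def div_less_iff_less_mult)

lemma rank_fill_site: "0 < L \<Longrightarrow> snd (fill_site L m) * L + fst (fill_site L m) = m"
  by (simp add: fill_site_def)

lemma rank_eq_imp_fill_site: "x \<in> torus L \<Longrightarrow> snd x * L + fst x = m \<Longrightarrow> x = fill_site L m"
proof -
  assume x: "x \<in> torus L" and rank: "snd x * L + fst x = m"
  from x have "fst x < L" by (auto simp: torus_def)
  then have "m div L = snd x" "m mod L = fst x"
    using rank by (auto intro!: div_nat_eqI)
  then show ?thesis by (simp add: fill_site_def prod_eq_iff)
qed

lemma fill_Suc:
  assumes m: "m < L * L" and "a \<in> {-1,0,1}" "b \<in> {-1,0,1}" "a \<noteq> b"
  shows "fill L a b (Suc m) = flip (cyc_up a = b) (fill_site L m) (fill L a b m)"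
proof -
  have L: "0 < L" using m by (cases L) auto
  have site: "fill L a b m (fill_site L m) = a"
    using fill_site_in_torus[OF m] rank_fill_site[OF L, of m] by (simp add: fill_def)
  have cyc: "(if cyc_up a = b then cyc_up a else cyc_down a) = b"
    using assms by (auto simp: cyc_up_def cyc_down_def)
  have upd: "fill L a b (Suc m) x = ((fill L a b m)(fill_site L m := b)) x" for x
  proof (cases "x = fill_site L m")
    case True
    then show ?thesis using fill_site_in_torus[OF m] rank_fill_site[OF L, of m] by (simp add: fill_def)
  next
    case False
    then have "x \<in> torus L \<Longrightarrow> snd x * L + fst x \<noteq> m" using rank_eq_imp_fill_site by blast
    then show ?thesis using False by (auto simp: fill_def)
  qed
  show ?thesis
    unfolding flip_def site cyc by (rule ext) (rule upd)
qed

lemma inj_on_fill: "a \<noteq> b \<Longrightarrow> k \<le> L * L \<Longrightarrow> inj_on (fill L a b) {..<k}"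
proof (rule linorder_inj_onI')
  fix p q assume "a \<noteq> b" "k \<le> L * L" "p \<in> {..<k}" "q \<in> {..<k}" "p < q"
  moreover from this have "0 < L" by (cases L) auto
  ultimately have "fill L a b p (fill_site L p) = a" "fill L a b q (fill_site L p) = b"
    using fill_site_in_torus[of p L] rank_fill_site[of L p] by (auto simp: fill_def)
  then show "fill L a b p \<noteq> fill L a b q" using \<open>a \<noteq> b\<close> by auto
qed

lemma fill_0_1_apply: "i < L \<Longrightarrow> j < L \<Longrightarrow> fill L 0 1 m (i, j) = of_bool (j * L + i < m)"
  by (simp add: fill_def torus_def)

text \<open>Row \<open>j\<close> of \<open>fill L 0 1 m\<close> is the indicator of \<open>i < m - j * L\<close>, which changes along the
  cycle only in the row \<open>j = m div L\<close>.\<close>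
lemma fill_0_1_horizontal_le:
  assumes L: "0 < L"
  shows "(\<Sum>x\<in>torus L. real_of_int ((fill L 0 1 m ((fst x + 1) mod L, snd x) - fill L 0 1 m x)^2)) \<le> 2"
proof -
  have row: "(\<Sum>i<L. real_of_int ((fill L 0 1 m ((i + 1) mod L, j) - fill L 0 1 m (i, j))^2))
      = (\<Sum>i<L. of_bool ((Suc i mod L < m - j * L) \<noteq> (i < m - j * L)))" if "j < L" for j
    by (rule sum.cong) (use that L in \<open>auto simp: fill_0_1_apply less_diff_conv\<close>)
  have "(\<Sum>i<L. of_bool ((Suc i mod L < m - j * L) \<noteq> (i < m - j * L)) :: real) = 0"
    if "j \<noteq> m div L" for j
  proof (rule cyclic_threshold_changes_eq_0[OF L])
    show "m - j * L = 0 \<or> L \<le> m - j * L"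
    proof (rule ccontr)
      assume "\<not> (m - j * L = 0 \<or> L \<le> m - j * L)"
      then have "m div L = j" by (intro div_nat_eqI) (auto simp: mult.commute)
      with that show False by simp
    qed
  qed
  then have row_le: "(\<Sum>i<L. of_bool ((Suc i mod L < m - j * L) \<noteq> (i < m - j * L)) :: real)
      \<le> (if j = m div L then 2 else 0)" for j
    using cyclic_threshold_changes_le_2[OF L] by simp
  have "(\<Sum>x\<in>torus L. real_of_int ((fill L 0 1 m ((fst x + 1) mod L, snd x) - fill L 0 1 m x)^2))
      = (\<Sum>j<L. \<Sum>i<L. real_of_int ((fill L 0 1 m ((i + 1) mod L, j) - fill L 0 1 m (i, j))^2))"
    unfolding sum_torus fst_conv snd_conv by (rule sum.swap)
  also have "\<dots> = (\<Sum>j<L. \<Sum>i<L. of_bool ((Suc i mod L < m - j * L) \<noteq> (i < m - j * L)))"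
    by (intro sum.cong refl row) simp
  also have "\<dots> \<le> (\<Sum>j<L. if j = m div L then 2 else 0)"
    by (intro sum_mono row_le)
  also have "\<dots> \<le> 2" by (simp add: sum.delta')
  finally show ?thesis .
qed

text \<open>Column \<open>i\<close> of \<open>fill L 0 1 m\<close> is the indicator of \<open>j < (m + (L - 1 - i)) div L\<close>.\<close>
lemma fill_0_1_vertical_le:
  assumes L: "0 < L"
  shows "(\<Sum>x\<in>torus L. real_of_int ((fill L 0 1 m (fst x, (snd x + 1) mod L) - fill L 0 1 m x)^2))
    \<le> 2 * real L"
proof -
  have threshold: "(j * L + i < m) = (j < (m + (L - 1 - i)) div L)" if "i < L" for i j
  proof -
    have "(j < (m + (L - 1 - i)) div L) = (Suc j * L \<le> m + (L - 1 - i))"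
      by (subst Suc_le_eq[symmetric]) (rule less_eq_div_iff_mult_less_eq[OF L])
    also have "\<dots> = (j * L + i < m)" using that by auto
    finally show ?thesis by simp
  qed
  have column: "(\<Sum>j<L. real_of_int ((fill L 0 1 m (i, (j + 1) mod L) - fill L 0 1 m (i, j))^2)) \<le> 2"
    if "i < L" for i
  proof -
    have "(\<Sum>j<L. real_of_int ((fill L 0 1 m (i, (j + 1) mod L) - fill L 0 1 m (i, j))^2)) =
        (\<Sum>j<L. of_bool ((Suc j mod L < (m + (L - 1 - i)) div L) \<noteq> (j < (m + (L - 1 - i)) div L)))"
      by (rule sum.cong) (use that L threshold in \<open>auto simp: fill_0_1_apply\<close>)
    also have "\<dots> \<le> 2" by (rule cyclic_threshold_changes_le_2[OF L])
    finally show ?thesis .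
  qed
  have "(\<Sum>i<L. \<Sum>j<L. real_of_int ((fill L 0 1 m (i, (j + 1) mod L) - fill L 0 1 m (i, j))^2))
      \<le> (\<Sum>i<L. 2)"
    by (intro sum_mono column) simp
  then show ?thesis by (simp add: sum_torus)
qed

lemma ham_fill_0_1_le:
  assumes "0 < L" and "0 \<le> h"
  shows "ham h L (fill L 0 1 m) \<le> 2 * real L + 2"
proof -
  have "0 \<le> h * (\<Sum>x\<in>torus L. real_of_int (fill L 0 1 m x))"
    using assms(2) by (intro mult_nonneg_nonneg sum_nonneg) (auto simp: fill_def)
  then show ?thesis
    using fill_0_1_horizontal_le[OF assms(1), of m] fill_0_1_vertical_le[OF assms(1), of m]
    by (simp add: ham_def sum.distrib)
qed

lemma cap_singleton: "cap \<beta> h L {a} B = gibbs \<beta> h L a * lam \<beta> h L a * escape_prob \<beta> h L {a} B a"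
  by (simp add: cap_def)

lemma cap_singleton_le:
  assumes "0 < L" "0 \<le> \<beta>"
  shows "cap \<beta> h L {a} B \<le> 2 * real (L * L) * gibbs \<beta> h L a"
proof -
  have "lam \<beta> h L a * escape_prob \<beta> h L {a} B a \<le> 2 * real (L * L) * 1"
    using assms by (intro mult_mono lam_le escape_prob_le_1 escape_prob_nonneg) auto
  then show ?thesis
    using gibbs_pos[of \<beta> h L a] by (simp add: cap_singleton mult.assoc mult.left_commute)
qed

lemma sum_rate_eq_potential:
  assumes "0 < L"
  shows "(\<Sum>y\<in>torus L. \<Sum>s\<in>(UNIV::bool set). rate \<beta> h L \<sigma> (flip s y \<sigma>) * eq_potential \<beta> h L A B (flip s y \<sigma>))
    = lam \<beta> h L \<sigma> * escape_prob \<beta> h L A B \<sigma>"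
  using lam_pos[OF assms, of \<beta> h \<sigma>]
  by (simp add: escape_prob_first_step[OF assms] sum_distrib_left)

lemma eq_potential_harmonic:
  assumes "0 < L" "\<sigma> \<notin> A" "\<sigma> \<notin> B"
  shows "(\<Sum>y\<in>torus L. \<Sum>s\<in>(UNIV::bool set).
    rate \<beta> h L \<sigma> (flip s y \<sigma>) * (eq_potential \<beta> h L A B (flip s y \<sigma>) - eq_potential \<beta> h L A B \<sigma>)) = 0"
  using sum_rate_eq_potential[OF assms(1), of \<beta> h \<sigma> A B] assms(2,3)
  by (simp add: right_diff_distrib sum_subtractf lam_def eq_potential_def flip: sum_distrib_right)

lemma dirichlet_form_eq_potential:
  assumes "0 < L" "a \<in> configs L" "b \<in> configs L" "a \<noteq> b"
  shows "dirichlet_form \<beta> h L (eq_potential \<beta> h L {a} {b}) = 2 * cap \<beta> h L {a} {b}"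
proof -
  have "dirichlet_form \<beta> h L (eq_potential \<beta> h L {a} {b}) = 2 * gibbs \<beta> h L a *
      (\<Sum>y\<in>torus L. \<Sum>s\<in>(UNIV::bool set). rate \<beta> h L a (flip s y a) * eq_potential \<beta> h L {a} {b} (flip s y a))"
  proof (rule dirichlet_form_harmonic[OF assms(2-4)])
    fix \<sigma> assume "\<sigma> \<noteq> a" "\<sigma> \<noteq> b"
    then show "(\<Sum>y\<in>torus L. \<Sum>s\<in>(UNIV::bool set). rate \<beta> h L \<sigma> (flip s y \<sigma>) *
        (eq_potential \<beta> h L {a} {b} (flip s y \<sigma>) - eq_potential \<beta> h L {a} {b} \<sigma>)) = 0"
      by (intro eq_potential_harmonic assms(1)) auto
  qed (use assms in \<open>auto simp: eq_potential_def\<close>)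
  then show ?thesis
    by (simp add: sum_rate_eq_potential[OF assms(1)] cap_singleton)
qed

lemma square_diff_le_dirichlet_form_fill:
  assumes "a \<in> {-1,0,1}" "b \<in> {-1,0,1}" "a \<noteq> b"
  shows "(g (const_conf L b) - g (const_conf L a))^2 \<le> dirichlet_form \<beta> h L g *
    (\<Sum>i<L * L. 1 / (gibbs \<beta> h L (fill L a b i) * rate \<beta> h L (fill L a b i) (fill L a b (Suc i))))"
  using square_diff_le_dirichlet_form_path[of "fill L a b" L "L * L" "fill_site L" "\<lambda>_. cyc_up a = b" g \<beta> h]
    assms
  by (simp add: fill_0 fill_card_torus const_conf_in_configs fill_site_in_torus fill_Suc inj_on_fill)

lemma escape_prob_const_conf_pos:
  assumes "0 < L" "a \<in> {-1,0,1}" "b \<in> {-1,0,1}" "a \<noteq> b"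
  shows "0 < escape_prob \<beta> h L {const_conf L a} {const_conf L b} (const_conf L a)"
proof -
  let ?g = "eq_potential \<beta> h L {const_conf L a} {const_conf L b}"
  have "const_conf L a \<noteq> const_conf L b"
    using assms by (simp add: const_conf_inject)
  then have "(?g (const_conf L b) - ?g (const_conf L a))^2 = 1"
    by (simp add: eq_potential_def)
  then have "dirichlet_form \<beta> h L ?g \<noteq> 0"
    using square_diff_le_dirichlet_form_fill[OF assms(2-4), of ?g L \<beta> h] by auto
  then have "escape_prob \<beta> h L {const_conf L a} {const_conf L b} (const_conf L a) \<noteq> 0"
    using assms \<open>const_conf L a \<noteq> const_conf L b\<close>
    by (simp add: dirichlet_form_eq_potential const_conf_in_configs cap_singleton)
  then show ?thesis
    using escape_prob_nonneg[OF assms(1), of \<beta> h "{const_conf L a}" "{const_conf L b}" "const_conf L a"]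
    by linarith
qed

lemma fill_0_1_resistance_le:
  assumes "0 < L" "0 \<le> h" "0 \<le> \<beta>"
  shows "(\<Sum>i<L * L. 1 / (gibbs \<beta> h L (fill L 0 1 i) * rate \<beta> h L (fill L 0 1 i) (fill L 0 1 (Suc i))))
    \<le> real (L * L) * (partition_fun \<beta> h L * exp (\<beta> * (2 * real L + 2)))"
proof -
  have "1 / (gibbs \<beta> h L (fill L 0 1 i) * rate \<beta> h L (fill L 0 1 i) (fill L 0 1 (Suc i)))
      \<le> partition_fun \<beta> h L * exp (\<beta> * (2 * real L + 2))" for i
  proof -
    have "max (ham h L (fill L 0 1 i)) (ham h L (fill L 0 1 (Suc i))) \<le> 2 * real L + 2"
      using ham_fill_0_1_le[OF assms(1,2)] by simp
    then have "exp (\<beta> * max (ham h L (fill L 0 1 i)) (ham h L (fill L 0 1 (Suc i))))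
        \<le> exp (\<beta> * (2 * real L + 2))"
      using assms(3) by (simp add: mult_left_mono)
    then show ?thesis
      using partition_fun_pos[of \<beta> h L]
      by (simp add: gibbs_mult_rate exp_minus field_simps)
  qed
  then have "(\<Sum>i<L * L. 1 / (gibbs \<beta> h L (fill L 0 1 i) * rate \<beta> h L (fill L 0 1 i) (fill L 0 1 (Suc i))))
      \<le> of_nat (card {..<L * L}) * (partition_fun \<beta> h L * exp (\<beta> * (2 * real L + 2)))"
    by (intro sum_bounded_above)
  then show ?thesis by simp
qed

lemma one_minus_eq_potential_0_squared_le:
  assumes "0 < L" "0 \<le> \<beta>" "0 < h" "2 * real L + 4 \<le> h * real L * real L"
  shows "(1 - eq_potential \<beta> h L {const_conf L (-1)} {const_conf L 1} (const_conf L 0))^2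
    \<le> 4 * real (L * L) ^ 2 * exp (- (2 - h) * \<beta>)"
proof -
  let ?m = "const_conf L (-1)" and ?p = "const_conf L 1"
  let ?g = "eq_potential \<beta> h L {?m} {?p}"
  let ?Z = "partition_fun \<beta> h L"
  have "?m \<noteq> ?p" using assms(1) by (simp add: const_conf_inject)
  then have "dirichlet_form \<beta> h L ?g \<le> 4 * real (L * L) * gibbs \<beta> h L ?m"
    using cap_singleton_le[OF assms(1,2), of h ?m "{?p}"]
    by (simp add: dirichlet_form_eq_potential[OF assms(1)] const_conf_in_configs)
  also have "\<dots> = 4 * real (L * L) * exp (- \<beta> * (h * real (L * L))) / ?Z"
    by (simp add: gibbs_eq ham_const_conf)
  finally have form: "dirichlet_form \<beta> h L ?g \<le> 4 * real (L * L) * exp (- \<beta> * (h * real (L * L))) / ?Z" .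
  have "(1 - ?g (const_conf L 0))^2 = (?g ?p - ?g (const_conf L 0))^2"
    by (simp add: eq_potential_def)
  also have "\<dots> \<le> dirichlet_form \<beta> h L ?g * (real (L * L) * (?Z * exp (\<beta> * (2 * real L + 2))))"
    using square_diff_le_dirichlet_form_fill[of 0 1 ?g L \<beta> h]
      fill_0_1_resistance_le[OF assms(1) _ assms(2), of h] assms(3)
    by (auto intro: order_trans mult_left_mono dirichlet_form_nonneg)
  also have "\<dots> \<le> 4 * real (L * L) * exp (- \<beta> * (h * real (L * L))) / ?Z
      * (real (L * L) * (?Z * exp (\<beta> * (2 * real L + 2))))"
    using partition_fun_pos[of \<beta> h L] by (intro mult_right_mono form) auto
  also have "\<dots> = 4 * real (L * L) ^ 2 * exp (\<beta> * (2 * real L + 2 - h * real L * real L))"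
    using partition_fun_pos[of \<beta> h L]
    by (simp add: power2_eq_square exp_diff exp_minus field_simps)
  also have "\<dots> \<le> 4 * real (L * L) ^ 2 * exp (- (2 - h) * \<beta>)"
  proof -
    have "\<beta> * (2 * real L + 2 - h * real L * real L) \<le> \<beta> * (- (2 - h))"
      using assms(2-4) by (intro mult_left_mono) auto
    then show ?thesis by (intro mult_left_mono) (simp_all add: mult.commute)
  qed
  finally show ?thesis .
qed

lemma capacity_ratio_bounds:
  assumes "0 < L" "0 \<le> \<beta>" "0 < h" "2 * real L + 4 \<le> h * real L * real L"
  defines "r \<equiv> cap \<beta> h L {const_conf L (-1)} {const_conf L 1}
    / cap \<beta> h L {const_conf L (-1)} {const_conf L 0, const_conf L 1}"
  shows "1 - 2 * sqrt (real (card (torus L)) ^ 2 * exp (- (2 - h) * \<beta>)) \<le> r" and "r \<le> 1"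
proof -
  let ?m = "const_conf L (-1)" and ?z = "const_conf L 0" and ?p = "const_conf L 1"
  let ?e1 = "escape_prob \<beta> h L {?m} {?p} ?m" and ?e2 = "escape_prob \<beta> h L {?m} {?z, ?p} ?m"
  let ?g = "eq_potential \<beta> h L {?m} {?p}"
  have "gibbs \<beta> h L ?m * lam \<beta> h L ?m \<noteq> 0"
    using gibbs_pos lam_pos[OF assms(1)] by (metis mult_pos_pos less_irrefl)
  then have r: "r = ?e1 / ?e2"
    unfolding r_def cap_singleton by (rule mult_divide_mult_cancel_left)
  have "0 < ?e1"
    using assms(1) by (intro escape_prob_const_conf_pos) auto
  moreover have "?e1 \<le> ?e2"
    using assms(1) by (intro escape_prob_mono_target) auto
  ultimately show "r \<le> 1"
    by (simp add: r)
  have "?g ?z * ?e2 \<le> ?e1"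
    using eq_potential_le_1[OF assms(1)]
    by (intro escape_prob_ge_stopped[OF assms(1)]) (auto simp: eq_potential_def[of _ _ _ _ _ ?p])
  with \<open>0 < ?e1\<close> \<open>?e1 \<le> ?e2\<close> have "?g ?z \<le> r"
    by (simp add: r field_simps)
  define X where "X = real (card (torus L)) ^ 2 * exp (- (2 - h) * \<beta>)"
  have "(1 - ?g ?z)^2 \<le> 2^2 * X"
    using one_minus_eq_potential_0_squared_le[OF assms(1-4)] by (simp add: X_def card_torus)
  then have "1 - ?g ?z \<le> sqrt (2^2 * X)"
    by (rule real_le_rsqrt)
  also have "\<dots> = 2 * sqrt X"
    by (simp only: real_sqrt_mult real_sqrt_abs abs_numeral)
  finally show "1 - 2 * sqrt (real (card (torus L)) ^ 2 * exp (- (2 - h) * \<beta>)) \<le> r"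
    using \<open>?g ?z \<le> r\<close> unfolding X_def by linarith
qed

lemma n0_bounds:
  assumes "0 < h" "h < 1"
  shows "2 \<le> n0 h" and "2 < h * (real (n0 h) + 1)"
proof -
  have "2 \<le> \<lfloor>2 / h\<rfloor>"
    using assms by (simp add: le_floor_iff field_simps)
  then show "2 \<le> n0 h"
    unfolding n0_def by linarith
  have "2 / h < real (n0 h) + 1"
    using \<open>2 \<le> \<lfloor>2 / h\<rfloor>\<close> unfolding n0_def by linarith
  then show "2 < h * (real (n0 h) + 1)"
    using assms by (simp add: field_simps)
qed

lemma side_length_large:
  assumes "0 < h" "h < 1" "n0 h * (n0 h + 1) + 2 \<le> L"
  shows "0 < L" and "2 * real L + 4 \<le> h * real L * real L"
proof -
  define N where "N = real (n0 h)"
  have N: "2 \<le> N" "2 < h * (N + 1)"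
    using n0_bounds[OF assms(1,2)] by (auto simp: N_def)
  have L: "N * (N + 1) + 2 \<le> real L"
    using of_nat_mono[OF assms(3), where 'a = real] unfolding N_def by (simp add: algebra_simps)
  have "N * 2 < N * (h * (N + 1))"
    using N by (intro mult_strict_left_mono) auto
  then have "4 < h * (N * (N + 1))"
    using N(1) by (simp add: algebra_simps)
  also have "\<dots> \<le> h * real L"
    using assms(1) L by (intro mult_left_mono) auto
  finally have "4 \<le> h * real L" by simp
  moreover have "2 \<le> real L"
    using L N(1) mult_nonneg_nonneg[of N "N + 1"] by linarith
  ultimately have "4 * real L \<le> h * real L * real L"
    by (intro mult_right_mono) auto
  with \<open>2 \<le> real L\<close> show "2 * real L + 4 \<le> h * real L * real L"
    by linarith
  from \<open>2 \<le> real L\<close> show "0 < L"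
    by simp
qed

theorem lemma7p4:
  fixes h :: real and L :: "real \<Rightarrow> nat"
  assumes "0 < h" and "h < 1" and "2 / h \<notin> \<int>"
    and "\<forall>\<beta> > 0. L \<beta> \<ge> n0 h * (n0 h + 1) + 2"
    and "((\<lambda>\<beta>. sqrt (real (card (torus (L \<beta>)))) *
            (exp (- ((real (n0 h) + 1) * h - 2) * \<beta>) + exp (- h * \<beta>))) \<longlongrightarrow> 0) at_top"
    and "((\<lambda>\<beta>. real (card (torus (L \<beta>))) ^ 2 * exp (- (2 - h) * \<beta>)) \<longlongrightarrow> 0) at_top"
  shows "((\<lambda>\<beta>. cap \<beta> h (L \<beta>) {const_conf (L \<beta>) (-1)} {const_conf (L \<beta>) 1}
              / cap \<beta> h (L \<beta>) {const_conf (L \<beta>) (-1)} {const_conf (L \<beta>) 0, const_conf (L \<beta>) 1})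
          \<longlongrightarrow> 1) at_top"
proof -
  let ?r = "\<lambda>\<beta>. cap \<beta> h (L \<beta>) {const_conf (L \<beta>) (-1)} {const_conf (L \<beta>) 1}
    / cap \<beta> h (L \<beta>) {const_conf (L \<beta>) (-1)} {const_conf (L \<beta>) 0, const_conf (L \<beta>) 1}"
  let ?lower = "\<lambda>\<beta>. 1 - 2 * sqrt (real (card (torus (L \<beta>))) ^ 2 * exp (- (2 - h) * \<beta>))"
  have "?lower \<beta> \<le> ?r \<beta> \<and> ?r \<beta> \<le> 1" if "0 < \<beta>" for \<beta>
    using capacity_ratio_bounds[of "L \<beta>" \<beta> h] side_length_large[OF assms(1,2), of "L \<beta>"] assms(1,4) that
    by auto
  then have "\<forall>\<^sub>F \<beta> in at_top. ?lower \<beta> \<le> ?r \<beta> \<and> ?r \<beta> \<le> 1"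
    by (blast intro: eventually_mono[OF eventually_gt_at_top[of "0::real"]])
  moreover have "(?lower \<longlongrightarrow> 1) at_top"
    using tendsto_diff[OF tendsto_const tendsto_mult[OF tendsto_const tendsto_real_sqrt[OF assms(6)]], of 1 2]
    by simp
  ultimately show ?thesis
    by (intro tendsto_sandwich[of ?lower ?r _ "\<lambda>_. 1"]) (auto elim: eventually_mono)
qed

end
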